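(* Let $F$ be a subfield of $\mathbb{R}$ and let $\sigma$ be an $F$-simplex. Then for every dihedral angle $\theta$ of $\sigma$ (the angle between two faces of $\sigma$ of the form $\mathrm{conv}(S\cup\{s\})$ and $\mathrm{conv}(S\cup\{t\})$ for a set $S$ of vertices and distinct vertices $s,t\notin S$), the square of each trigonometric function of $\theta$ (where defined) lies in $F$; in particular $\cos^2\theta\in F$.
   Context: A Euclidean simplex is an $F$-simplex if the square of the length of each of its edges ($1$-cells) lies in $F$. *)

theory Defs
  imports "HOL-Analysis.Analysis"
begin

definition real_subfield :: "real set \<Rightarrow> bool" where
  "real_subfield F \<longleftrightarrow> 0 \<in> F \<and> 1 \<in> F \<and>
     (\<forall>x\<in>F. \<forall>y\<in>F. x + y \<in> F \<and> x - y \<in> F \<and> x * y \<in> F) \<and>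
     (\<forall>x\<in>F. x \<noteq> 0 \<longrightarrow> inverse x \<in> F)"

definition F_simplex :: "real set \<Rightarrow> 'a::euclidean_space set \<Rightarrow> bool" where
  "F_simplex F V \<longleftrightarrow> finite V \<and> V \<noteq> {} \<and> \<not> affine_dependent V \<and>
     (\<forall>x\<in>V. \<forall>y\<in>V. x \<noteq> y \<longrightarrow> (dist x y)\<^sup>2 \<in> F)"

definition vec_angle :: "'a::real_inner \<Rightarrow> 'a \<Rightarrow> real" where
  "vec_angle u v = arccos (inner u v / (norm u * norm v))"

text \<open>Dihedral angle of the simplex with vertex set V between the faces
  conv(S \<union> {s}) and conv(S \<union> {t}): the angle between the components of
  s and t orthogonal to the common face aff(S), i.e. the angle between the
  inner normals within the two faces to their common ridge conv(S).\<close>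
definition dihedral_angle :: "'a::euclidean_space set \<Rightarrow> 'a \<Rightarrow> 'a \<Rightarrow> real" where
  "dihedral_angle S s t =
     vec_angle (s - closest_point (affine hull S) s) (t - closest_point (affine hull S) t)"

end

theory Submission
  imports Defs
begin

text \<open>All vectors involved live in the \<open>F\<close>-linear span of the edge vectors of the simplex, on
  which the inner product is \<open>F\<close>-valued by the polarization identity. This span is stable
  under orthogonal projection onto the span of finitely many of its elements, since
  Gram--Schmidt only divides inner products by one another. Hence both normals to the
  common face lie in it, and \<open>cos\<^sup>2 \<theta> = \<langle>u,v\<rangle>\<^sup>2 / (\<langle>u,u\<rangle> \<langle>v,v\<rangle>)\<close> lies in \<open>F\<close>;
  the other squared trigonometric functions are rational in \<open>cos\<^sup>2 \<theta>\<close>.\<close>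

lemma real_subfield_0: "real_subfield F \<Longrightarrow> 0 \<in> F"
  and real_subfield_1: "real_subfield F \<Longrightarrow> 1 \<in> F"
  by (simp_all add: real_subfield_def)

lemma real_subfield_closed:
  assumes "real_subfield F" "x \<in> F" "y \<in> F"
  shows "x + y \<in> F" "x - y \<in> F" "x * y \<in> F" "x / y \<in> F"
  using assms by (cases "y = 0"; auto simp: real_subfield_def divide_inverse)+

lemma real_subfield_power2: "real_subfield F \<Longrightarrow> x \<in> F \<Longrightarrow> x\<^sup>2 \<in> F"
  by (simp add: power2_eq_square real_subfield_closed)

lemma trig_squares_mem_real_subfield:
  assumes F: "real_subfield F" and cos2: "(cos \<theta>)\<^sup>2 \<in> F"
  shows "(cos \<theta>)\<^sup>2 \<in> F \<and> (sin \<theta>)\<^sup>2 \<in> F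
    \<and> (cos \<theta> \<noteq> 0 \<longrightarrow> (tan \<theta>)\<^sup>2 \<in> F \<and> (1 / cos \<theta>)\<^sup>2 \<in> F)
    \<and> (sin \<theta> \<noteq> 0 \<longrightarrow> (cot \<theta>)\<^sup>2 \<in> F \<and> (1 / sin \<theta>)\<^sup>2 \<in> F)"
proof -
  have sin2: "(sin \<theta>)\<^sup>2 \<in> F"
    using real_subfield_closed(2)[OF F real_subfield_1[OF F] cos2] by (simp add: sin_squared_eq)
  have "(tan \<theta>)\<^sup>2 = (sin \<theta>)\<^sup>2 / (cos \<theta>)\<^sup>2" "(cot \<theta>)\<^sup>2 = (cos \<theta>)\<^sup>2 / (sin \<theta>)\<^sup>2"
    "(1 / cos \<theta>)\<^sup>2 = 1 / (cos \<theta>)\<^sup>2" "(1 / sin \<theta>)\<^sup>2 = 1 / (sin \<theta>)\<^sup>2"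
    by (simp_all add: tan_def cot_def power_divide)
  then show ?thesis
    using cos2 sin2 by (simp add: real_subfield_closed(4) real_subfield_1[OF F] F)
qed

lemma cos_vec_angle: "cos (vec_angle u v) = inner u v / (norm u * norm v)"
proof -
  have "\<bar>inner u v / (norm u * norm v)\<bar> \<le> 1"
    using Cauchy_Schwarz_ineq2[of u v]
    by (cases "norm u * norm v = 0") (simp_all add: abs_divide abs_mult)
  then show ?thesis
    unfolding vec_angle_def abs_le_iff by (intro cos_arccos) linarith+
qed

lemma cos_vec_angle_squared:
  "(cos (vec_angle u v))\<^sup>2 = (inner u v)\<^sup>2 / (inner u u * inner v v)"
  by (simp add: cos_vec_angle power_divide power_mult_distrib power2_norm_eq_inner)

lemma closest_point_eq_if_inner_le_0:
  fixes H :: "'a::{real_inner, heine_borel} set"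
  assumes "convex H" "closed H" "c \<in> H" "\<And>y. y \<in> H \<Longrightarrow> inner (z - c) (y - c) \<le> 0"
  shows "closest_point H z = c"
proof -
  have "dist z c \<le> dist z y" if "y \<in> H" for y
  proof (rule power2_le_imp_le)
    have "(dist z c)\<^sup>2 \<le> (norm (z - c))\<^sup>2 + (norm (y - c))\<^sup>2 - 2 * inner (z - c) (y - c)"
      using assms(4)[OF that] zero_le_power2[of "norm (y - c)"] unfolding dist_norm by linarith
    also have "\<dots> = (dist z y)\<^sup>2"
      using dot_norm_neg[of "z - c" "y - c"] by (simp add: dist_norm)
    finally show "(dist z c)\<^sup>2 \<le> (dist z y)\<^sup>2" .
  qed simp
  then show ?thesis
    using closest_point_unique[OF assms(1-3)] by simp
qed

locale subfield_inner_subspace =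
  fixes F :: "real set" and L :: "'a::real_inner set"
  assumes subfield: "real_subfield F"
    and add_closed: "a \<in> L \<Longrightarrow> b \<in> L \<Longrightarrow> a + b \<in> L"
    and scale_closed: "c \<in> F \<Longrightarrow> a \<in> L \<Longrightarrow> c *\<^sub>R a \<in> L"
    and inner_closed: "a \<in> L \<Longrightarrow> b \<in> L \<Longrightarrow> inner a b \<in> F"
begin

lemma zero_closed: "a \<in> L \<Longrightarrow> 0 \<in> L"
  using scale_closed[OF real_subfield_0[OF subfield]] by fastforce

lemma diff_closed:
  assumes "a \<in> L" "b \<in> L"
  shows "a - b \<in> L"
proof -
  have "- 1 \<in> F"
    using real_subfield_closed(2)[OF subfield real_subfield_0[OF subfield] real_subfield_1[OF subfield]]
    by simp
  then have "- b \<in> L"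
    using scale_closed[OF _ \<open>b \<in> L\<close>] by fastforce
  then show ?thesis
    using add_closed[OF \<open>a \<in> L\<close> \<open>- b \<in> L\<close>] by simp
qed

lemma orthogonal_projection_mem:
  assumes "finite A" "A \<subseteq> L" "w \<in> L"
  shows "\<exists>d\<in>L. d \<in> span A \<and> (\<forall>b\<in>A. inner (w - d) b = 0)"
  using assms
proof (induction A arbitrary: w rule: finite_induct)
  case empty
  then show ?case using zero_closed by auto
next
  case (insert a A)
  obtain p where p: "p \<in> L" "p \<in> span A" "\<forall>b\<in>A. inner (w - p) b = 0"
    using insert.IH[of w] insert.prems by auto
  obtain q where q: "q \<in> L" "q \<in> span A" "\<forall>b\<in>A. inner (a - q) b = 0"
    using insert.IH[of a] insert.prems by auto
  define a' where "a' = a - q"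
  \<comment> \<open>If \<open>a \<in> span A\<close> then \<open>a' = 0\<close>, \<open>c = 0\<close> by division by zero, and \<open>d = p\<close> still works.\<close>
  define c where "c = inner (w - p) a' / inner a' a'"
  define d where "d = p + c *\<^sub>R a'"
  have a'L: "a' \<in> L"
    unfolding a'_def using insert.prems q by (simp add: diff_closed)
  have "c \<in> F"
    unfolding c_def using a'L p insert.prems
    by (intro real_subfield_closed(4) subfield inner_closed diff_closed) auto
  then have "d \<in> L"
    unfolding d_def using p a'L by (simp add: add_closed scale_closed)
  have "d \<in> span (insert a A)"
    unfolding d_def a'_def using p(2) q(2)
    by (meson insertI1 span_add span_base span_diff span_mono span_scale subset_insertI subsetD)
  have perp_A: "\<forall>b\<in>A. inner (w - d) b = 0"
    using p(3) q(3) by (simp add: d_def a'_def inner_diff_left inner_add_left)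
  have "inner (w - d) a' = inner (w - p) a' - c * inner a' a'"
    by (simp add: d_def inner_diff_left inner_add_left)
  also have "\<dots> = 0"
    by (cases "inner a' a' = 0") (simp_all add: c_def)
  finally have "inner (w - d) a' = 0" .
  moreover have "inner (w - d) q = 0"
    using orthogonal_to_span[OF q(2), of "w - d"] perp_A by (simp add: orthogonal_def)
  ultimately have "inner (w - d) a = 0"
    by (simp add: a'_def inner_diff_right)
  then show ?case
    using \<open>d \<in> L\<close> \<open>d \<in> span (insert a A)\<close> perp_A by auto
qed

end

lemma normal_to_affine_hull_mem:
  fixes S :: "'a::euclidean_space set"
  assumes "subfield_inner_subspace F L" "finite S" "p \<in> S" "\<And>x. x \<in> insert z S \<Longrightarrow> x - p \<in> L"
  shows "z - closest_point (affine hull S) z \<in> L"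
proof -
  interpret subfield_inner_subspace F L by fact
  define A where "A = (\<lambda>x. - p + x) ` S"
  have hull: "affine hull S = (\<lambda>x. p + x) ` span A"
    using affine_hull_insert_span_gen[of p S] \<open>p \<in> S\<close> by (simp add: A_def insert_absorb)
  have "A \<subseteq> L" "finite A"
    using assms by (auto simp: A_def)
  then obtain d where d: "d \<in> L" "d \<in> span A" "\<forall>b\<in>A. inner (z - p - d) b = 0"
    using orthogonal_projection_mem assms(4) by blast
  have "inner (z - (p + d)) (y - (p + d)) \<le> 0" if y: "y \<in> affine hull S" for y
  proof -
    obtain e where "e \<in> span A" "y = p + e"
      using y hull by auto
    then have "e - d \<in> span A"
      using d(2) by (simp add: span_diff)
    then have "inner (z - p - d) (e - d) = 0"
      using orthogonal_to_span[of "e - d" A "z - p - d"] d(3) by (auto simp: orthogonal_def)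
    then show ?thesis
      by (simp add: \<open>y = p + e\<close> algebra_simps)
  qed
  moreover have "p + d \<in> affine hull S"
    using hull d(2) by auto
  ultimately have "closest_point (affine hull S) z = p + d"
    by (intro closest_point_eq_if_inner_le_0 convex_affine_hull closed_affine_hull)
  then show ?thesis
    using diff_closed[OF assms(4)[of z] d(1)] by (simp add: algebra_simps)
qed

inductive_set difference_span :: "real set \<Rightarrow> 'a::real_vector set \<Rightarrow> 'a set" for F V where
  diff: "x \<in> V \<Longrightarrow> y \<in> V \<Longrightarrow> x - y \<in> difference_span F V"
| add: "a \<in> difference_span F V \<Longrightarrow> b \<in> difference_span F V \<Longrightarrow> a + b \<in> difference_span F V"
| scale: "c \<in> F \<Longrightarrow> a \<in> difference_span F V \<Longrightarrow> c *\<^sub>R a \<in> difference_span F V"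

lemma inner_diff_diff_eq_dist:
  fixes x y z w :: "'a::real_inner"
  shows "inner (x - y) (z - w) =
    ((dist x w)\<^sup>2 + (dist y z)\<^sup>2 - (dist x z)\<^sup>2 - (dist y w)\<^sup>2) / 2"
  by (simp add: dist_norm power2_norm_eq_inner inner_diff_left inner_diff_right inner_commute
      algebra_simps)

lemma subfield_inner_subspace_difference_span:
  fixes V :: "'a::real_inner set"
  assumes F: "real_subfield F" and dist2: "\<And>x y. x \<in> V \<Longrightarrow> y \<in> V \<Longrightarrow> (dist x y)\<^sup>2 \<in> F"
  shows "subfield_inner_subspace F (difference_span F V)"
proof
  have "2 \<in> F"
    using real_subfield_closed(1)[OF F real_subfield_1[OF F] real_subfield_1[OF F]] by simp
  have diff_inner: "inner (x - y) b \<in> F" if "x \<in> V" "y \<in> V" "b \<in> difference_span F V" for x y b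
    using that(3)
  proof induction
    case (diff z w)
    then show ?case
      unfolding inner_diff_diff_eq_dist
      using that(1,2) by (intro real_subfield_closed F dist2 \<open>2 \<in> F\<close>) simp_all
  qed (simp_all add: inner_add_right real_subfield_closed F)
  show "inner a b \<in> F" if "a \<in> difference_span F V" "b \<in> difference_span F V" for a b
    using that(1)
    by induction (simp_all add: diff_inner that(2) inner_add_left real_subfield_closed F)
qed (auto intro: difference_span.intros F)

theorem lemma6p4:
  fixes F :: "real set" and V S :: "'a::euclidean_space set" and s t :: 'a
  assumes "real_subfield F"
    and "F_simplex F V"
    and "S \<subseteq> V" and "S \<noteq> {}"
    and "s \<in> V" and "t \<in> V" and "s \<noteq> t" and "s \<notin> S" and "t \<notin> S"
  defines "\<theta> \<equiv> dihedral_angle S s t"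
  shows "(cos \<theta>)\<^sup>2 \<in> F \<and> (sin \<theta>)\<^sup>2 \<in> F
    \<and> (cos \<theta> \<noteq> 0 \<longrightarrow> (tan \<theta>)\<^sup>2 \<in> F \<and> (1 / cos \<theta>)\<^sup>2 \<in> F)
    \<and> (sin \<theta> \<noteq> 0 \<longrightarrow> (cot \<theta>)\<^sup>2 \<in> F \<and> (1 / sin \<theta>)\<^sup>2 \<in> F)"
proof -
  have "finite S"
    using assms(2,3) finite_subset by (auto simp: F_simplex_def)
  have "(dist x y)\<^sup>2 \<in> F" if "x \<in> V" "y \<in> V" for x y
    using assms(1,2) that by (cases "x = y") (auto simp: F_simplex_def real_subfield_0)
  then interpret subfield_inner_subspace F "difference_span F V"
    by (rule subfield_inner_subspace_difference_span[OF assms(1)])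
  obtain p where "p \<in> S"
    using assms(4) by auto
  have normal: "z - closest_point (affine hull S) z \<in> difference_span F V" if "z \<in> V" for z
    using \<open>finite S\<close> \<open>p \<in> S\<close> assms(3) that
    by (intro normal_to_affine_hull_mem[OF subfield_inner_subspace_axioms])
      (auto intro: difference_span.diff)
  have "(cos \<theta>)\<^sup>2 \<in> F"
    unfolding \<theta>_def dihedral_angle_def cos_vec_angle_squared
    using assms(5,6) by (intro real_subfield_closed real_subfield_power2 assms(1) inner_closed normal)
  with assms(1) show ?thesis
    by (rule trig_squares_mem_real_subfield)
qed

end
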